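(* Let $q_1,q_2,\dots$ be probabilities with $\sum_iq_i=1$ and let $\mathcal{M}=\sum_iq_i\mathcal{M}_i$ be the mechanism that runs $\mathcal{M}_i$ with probability $q_i$. Fix data sets $d,d'$ and suppose $T(\mathcal{M}_i(d),\mathcal{M}_i(d'))\ge f_i$ for trade-off functions with $f_1\le f_2\le f_3\le\cdots$ pointwise. Let $f(\alpha)=\inf\{\sum_iq_if_i(\alpha_i):\alpha_i\in[0,1],\ \sum_iq_i\alpha_i=\alpha\}$ and, for an index $t$, $p_t=\sum_{i<t}q_i$. Then for all $\alpha\in[0,1]$, $$T(\mathcal{M}(d),\mathcal{M}(d'))(\alpha)\ge f(\alpha)\ge f_t(\min\{1,\alpha+p_t\}).$$
   Context: For distributions $P,Q$ on a common space, $T(P,Q)(\alpha)=\inf_\phi\{1-\mathbb{E}_Q[\phi]:\mathbb{E}_P[\phi]\le\alpha\}$, infimum over measurable $\phi$ with values in $[0,1]$. A trade-off function is a convex, continuous, non-increasing $f:[0,1]\to[0,1]$ with $f(\alpha)\le1-\alpha$. The mixture mechanism outputs $\mathcal{M}(d)=\sum_iq_i\mathcal{M}_i(d)$ (the index $i$ is not revealed). *)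

theory Defs
  imports "HOL-Probability.Probability"
begin

definition tradeoff :: "'a measure \<Rightarrow> 'a measure \<Rightarrow> real \<Rightarrow> real" where
  "tradeoff P Q \<alpha> = Inf ((\<lambda>\<phi>. 1 - (\<integral>x. \<phi> x \<partial>Q)) `
     {\<phi> \<in> borel_measurable P. (\<forall>x\<in>space P. 0 \<le> \<phi> x \<and> \<phi> x \<le> 1) \<and> (\<integral>x. \<phi> x \<partial>P) \<le> \<alpha>})"

definition is_tradeoff_fun :: "(real \<Rightarrow> real) \<Rightarrow> bool" where
  "is_tradeoff_fun f \<longleftrightarrow>
     convex_on {0..1} f \<and> continuous_on {0..1} f \<and>
     (\<forall>x\<in>{0..1}. \<forall>y\<in>{0..1}. x \<le> y \<longrightarrow> f y \<le> f x) \<and>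
     (\<forall>x\<in>{0..1}. 0 \<le> f x \<and> f x \<le> 1 \<and> f x \<le> 1 - x)"

definition mixture :: "'a measure \<Rightarrow> (nat \<Rightarrow> real) \<Rightarrow> (nat \<Rightarrow> 'a measure) \<Rightarrow> 'a measure" where
  "mixture N q P = measure_of (space N) (sets N) (\<lambda>A. \<Sum>i. ennreal (q i) * emeasure (P i) A)"

definition mix_lower :: "(nat \<Rightarrow> real) \<Rightarrow> (nat \<Rightarrow> real \<Rightarrow> real) \<Rightarrow> real \<Rightarrow> real" where
  "mix_lower q f \<alpha> = Inf {(\<Sum>i. q i * f i (a i)) | a.
       (\<forall>i. a i \<in> {0..1}) \<and> (\<Sum>i. q i * a i) = \<alpha>}"

end

theory Submission
  imports Defs
begin

(* For a test phi of the two mixtures, the errors are q-averages of the component errors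
   A i = E_{P i} phi and B i = E_{Q i} phi.  Since 1 - B i >= T(P i, Q i)(A i) >= f i (A i) and
   sum q i A i <= alpha, the type II error is at least sum q i f i (A i) >= f(alpha); here f is
   non-increasing because the A i can be raised uniformly until their average is alpha.
   For the second bound, given alpha_i with sum q i alpha_i = alpha, raise alpha_i to 1 for i < t
   (free, since f t 1 = 0) and replace f i by the smaller f t for i >= t.  Jensen's inequality for
   the convex, continuous f t and countably many weights bounds the result below by f t of an
   average that is at most min 1 (alpha + p t). *)

lemma summable_mult_bounded:
  fixes q x :: "nat \<Rightarrow> real"
  assumes "summable q" "\<And>i. 0 \<le> q i" "\<And>i. \<bar>x i\<bar> \<le> B"
  shows "summable (\<lambda>i. q i * x i)"
proof (rule summable_comparison_test')
  show "summable (\<lambda>i. q i * B)" using assms(1) by (rule summable_mult2)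
  show "norm (q i * x i) \<le> q i * B" for i
    using assms(2,3) by (simp add: abs_mult mult_left_mono)
qed

lemma weighted_mean_in_atLeastAtMost:
  fixes w y :: "nat \<Rightarrow> real"
  assumes w: "\<And>i. 0 \<le> w i" "w sums 1" and y: "\<And>i. y i \<in> {a..b}"
  shows "summable (\<lambda>i. w i * y i)" "(\<Sum>i. w i * y i) \<in> {a..b}"
proof -
  show summable: "summable (\<lambda>i. w i * y i)"
  proof (rule summable_mult_bounded[OF sums_summable[OF w(2)] w(1)])
    show "\<bar>y i\<bar> \<le> max \<bar>a\<bar> \<bar>b\<bar>" for i
      using y[of i] by auto
  qed
  have const: "(\<lambda>i. w i * c) sums c" for c
    using sums_mult2[OF w(2), of c] by simp
  have "a \<le> (\<Sum>i. w i * y i)"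
    by (rule sums_le[OF _ const summable_sums[OF summable]])
      (use w(1) y in \<open>simp add: mult_left_mono\<close>)
  moreover have "(\<Sum>i. w i * y i) \<le> b"
    by (rule sums_le[OF _ summable_sums[OF summable] const])
      (use w(1) y in \<open>simp add: mult_left_mono\<close>)
  ultimately show "(\<Sum>i. w i * y i) \<in> {a..b}"
    by simp
qed

lemma convex_on_suminf_le:
  fixes g :: "real \<Rightarrow> real"
  assumes g: "convex_on {a..b} g" "continuous_on {a..b} g"
    and w: "\<And>i. 0 \<le> w i" "w sums 1" and y: "\<And>i. y i \<in> {a..b}"
    and summable_g: "summable (\<lambda>i. w i * g (y i))"
  shows "g (\<Sum>i. w i * y i) \<le> (\<Sum>i. w i * g (y i))"
proof -
  \<comment> \<open>truncate after n terms and put the remaining mass r n on the endpoint a\<close>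
  define r where "r n = 1 - (\<Sum>i<n. w i)" for n
  define w' where "w' n i = (if i < n then w i else r n)" for n i
  define y' where "y' n i = (if i < n then y i else a)" for n i
  define m where "m n = (\<Sum>i<Suc n. w' n i * y' n i)" for n
  have r_nonneg: "0 \<le> r n" for n
    using sum_le_suminf[of w "{..<n}"] w sums_unique[OF w(2)] by (auto simp: r_def sums_summable)
  have r_tendsto: "r \<longlonglongrightarrow> 0"
    using tendsto_diff[OF tendsto_const[of 1] w(2)[unfolded sums_def]] by (simp add: r_def[abs_def])
  have "a \<le> b" using y[of 0] by simp
  have weights: "(\<Sum>i<Suc n. w' n i) = 1" "\<And>i. 0 \<le> w' n i" "\<And>i. y' n i \<in> {a..b}" for n
    using w r_nonneg y \<open>a \<le> b\<close> by (auto simp: w'_def y'_def r_def)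
  have m_eq: "m n = (\<Sum>i<n. w i * y i) + r n * a" for n
    by (simp add: m_def w'_def y'_def)
  note mean = weighted_mean_in_atLeastAtMost[OF w y]
  have m_in: "m n \<in> {a..b}" for n
    using convex_sum[OF finite_lessThan convex_real_interval(5) weights(1,2) weights(3)]
    by (simp add: m_def)
  have lower: "(\<lambda>n. g (m n)) \<longlonglongrightarrow> g (\<Sum>i. w i * y i)"
  proof (rule continuous_on_tendsto_compose[OF g(2) _ mean(2)])
    show "m \<longlonglongrightarrow> (\<Sum>i. w i * y i)"
      unfolding m_eq
      using tendsto_add[OF summable_LIMSEQ[OF mean(1)] tendsto_mult_left_zero[OF r_tendsto, of a]] by simp
    show "\<forall>\<^sub>F n in sequentially. m n \<in> {a..b}"
      using m_in by simp
  qed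
  have upper: "(\<lambda>n. (\<Sum>i<n. w i * g (y i)) + r n * g a) \<longlonglongrightarrow> (\<Sum>i. w i * g (y i))"
    using tendsto_add[OF summable_LIMSEQ[OF summable_g] tendsto_mult_left_zero[OF r_tendsto, of "g a"]]
    by simp
  have le: "g (m n) \<le> (\<Sum>i<n. w i * g (y i)) + r n * g a" for n
  proof -
    have "g (\<Sum>i<Suc n. w' n i *\<^sub>R y' n i) \<le> (\<Sum>i<Suc n. w' n i * g (y' n i))"
      by (rule convex_on_sum[OF finite_lessThan _ g(1) weights(1,2) weights(3)]) auto
    then have "g (m n) \<le> (\<Sum>i<Suc n. w' n i * g (y' n i))"
      by (simp add: m_def)
    also have "\<dots> = (\<Sum>i<n. w i * g (y i)) + r n * g a"
      by (simp add: w'_def y'_def)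
    finally show ?thesis .
  qed
  show ?thesis
    by (rule tendsto_le[OF sequentially_bot upper lower]) (simp add: le)
qed

lemma tradeoff_fun_antimono:
  assumes "is_tradeoff_fun g" "x \<in> {0..1}" "y \<in> {0..1}" "x \<le> y"
  shows "g y \<le> g x"
  using assms unfolding is_tradeoff_fun_def by blast

lemma tradeoff_fun_range:
  assumes "is_tradeoff_fun g" "x \<in> {0..1}"
  shows "g x \<in> {0..1}"
  using assms unfolding is_tradeoff_fun_def by auto

lemma tradeoff_fun_one:
  assumes "is_tradeoff_fun g"
  shows "g 1 = 0"
  using assms unfolding is_tradeoff_fun_def
  by (metis atLeastAtMost_iff diff_self order_antisym order_refl zero_le_one)

lemma (in prob_space) integral_in_atLeastAtMost:
  fixes \<phi> :: "'a \<Rightarrow> real"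
  assumes "\<phi> \<in> borel_measurable M" "\<And>x. x \<in> space M \<Longrightarrow> \<phi> x \<in> {c..d}"
  shows "(\<integral>x. \<phi> x \<partial>M) \<in> {c..d}"
proof -
  have "integrable M \<phi>"
    using assms by (intro integrable_const_bound[where B = "max \<bar>c\<bar> \<bar>d\<bar>"]) force+
  then show ?thesis
    using assms(2) by (auto intro!: integral_ge_const integral_le_const)
qed

lemma tradeoff_le:
  assumes Q: "prob_space Q" "sets Q = sets P"
    and \<phi>: "\<phi> \<in> borel_measurable P" "\<And>x. x \<in> space P \<Longrightarrow> \<phi> x \<in> {0..1}"
    and "(\<integral>x. \<phi> x \<partial>P) \<le> \<alpha>"
  shows "tradeoff P Q \<alpha> \<le> 1 - (\<integral>x. \<phi> x \<partial>Q)"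
  unfolding tradeoff_def
proof (rule cInf_lower)
  show "1 - (\<integral>x. \<phi> x \<partial>Q) \<in> (\<lambda>\<phi>. 1 - (\<integral>x. \<phi> x \<partial>Q)) ` {\<phi> \<in> borel_measurable P.
      (\<forall>x\<in>space P. 0 \<le> \<phi> x \<and> \<phi> x \<le> 1) \<and> (\<integral>x. \<phi> x \<partial>P) \<le> \<alpha>}"
    using assms by auto
  have "(\<integral>x. \<psi> x \<partial>Q) \<le> 1"
    if "\<psi> \<in> borel_measurable P" "\<forall>x\<in>space P. 0 \<le> \<psi> x \<and> \<psi> x \<le> 1" for \<psi> :: "'a \<Rightarrow> real"
    using prob_space.integral_in_atLeastAtMost[OF Q(1), of \<psi> 0 1] that
      measurable_cong_sets[OF Q(2) refl] sets_eq_imp_space_eq[OF Q(2)] by auto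
  then show "bdd_below ((\<lambda>\<phi>. 1 - (\<integral>x. \<phi> x \<partial>Q)) ` {\<phi> \<in> borel_measurable P.
      (\<forall>x\<in>space P. 0 \<le> \<phi> x \<and> \<phi> x \<le> 1) \<and> (\<integral>x. \<phi> x \<partial>P) \<le> \<alpha>})"
    by (intro bdd_belowI[of _ 0]) fastforce
qed

lemma le_tradeoffI:
  assumes "0 \<le> \<alpha>"
    and "\<And>\<phi>. \<phi> \<in> borel_measurable P \<Longrightarrow> (\<And>x. x \<in> space P \<Longrightarrow> \<phi> x \<in> {0..1}) \<Longrightarrow>
      (\<integral>x. \<phi> x \<partial>P) \<le> \<alpha> \<Longrightarrow> c \<le> 1 - (\<integral>x. \<phi> x \<partial>Q)"
  shows "c \<le> tradeoff P Q \<alpha>"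
  unfolding tradeoff_def
proof (rule cInf_greatest)
  show "(\<lambda>\<phi>. 1 - (\<integral>x. \<phi> x \<partial>Q)) ` {\<phi> \<in> borel_measurable P.
      (\<forall>x\<in>space P. 0 \<le> \<phi> x \<and> \<phi> x \<le> 1) \<and> (\<integral>x. \<phi> x \<partial>P) \<le> \<alpha>} \<noteq> {}"
    using assms(1) by (auto intro!: exI[where x = "\<lambda>_. 0"])
qed (use assms(2) in auto)

lemma sets_mixture [simp]: "sets (mixture N q P) = sets N"
  by (simp add: mixture_def sets_measure_of[OF sets.space_closed] sets.sigma_sets_eq)

lemma space_mixture [simp]: "space (mixture N q P) = space N"
  using sets_eq_imp_space_eq[OF sets_mixture] .

lemma mixture_eq_bind:
  assumes "\<And>i. subprob_space (P i)" "\<And>i. sets (P i) = sets N"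
  shows "mixture N q P = density (count_space UNIV) (\<lambda>i. ennreal (q i)) \<bind> P"
proof -
  let ?W = "density (count_space UNIV) (\<lambda>i. ennreal (q i))"
  have P: "P \<in> measurable ?W (subprob_algebra N)"
    using assms by (auto simp: measurable_cong_sets[OF sets_density refl] space_subprob_algebra)
  have sets_bind: "sets (?W \<bind> P) = sets N"
    using P by (intro sets_bind) (auto simp: space_subprob_algebra)
  have "emeasure (?W \<bind> P) A = (\<Sum>i. ennreal (q i) * emeasure (P i) A)" if "A \<in> sets N" for A
    using P that
    by (simp add: emeasure_bind[of ?W P N] nn_integral_density nn_integral_count_space_nat)
  then have "mixture N q P = measure_of (space N) (sets N) (emeasure (?W \<bind> P))"
    unfolding mixture_def by (intro measure_of_eq) (auto simp: sets.space_closed sets.sigma_sets_eq)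
  also have "\<dots> = ?W \<bind> P"
    using measure_of_of_measure[of "?W \<bind> P"] sets_bind sets_eq_imp_space_eq[OF sets_bind] by simp
  finally show ?thesis .
qed

lemma integral_mixture_sums:
  fixes \<phi> :: "'a \<Rightarrow> real"
  assumes q: "\<And>i. 0 \<le> q i" "summable q"
    and P: "\<And>i. prob_space (P i)" "\<And>i. sets (P i) = sets N"
    and \<phi>: "\<phi> \<in> borel_measurable N" "\<And>x. x \<in> space N \<Longrightarrow> \<bar>\<phi> x\<bar> \<le> B"
  shows "(\<lambda>i. q i * (\<integral>x. \<phi> x \<partial>P i)) sums (\<integral>x. \<phi> x \<partial>mixture N q P)"
proof -
  let ?W = "density (count_space UNIV) (\<lambda>i. ennreal (q i))"
  have P_meas: "P \<in> measurable ?W (subprob_algebra N)"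
    using P by (auto simp: measurable_cong_sets[OF sets_density refl] space_subprob_algebra
        prob_space_imp_subprob_space)
  have "emeasure ?W UNIV = ennreal (\<Sum>i. q i)"
    using q by (simp add: emeasure_density nn_integral_count_space_nat suminf_ennreal2)
  then have W: "finite_measure ?W"
    by (intro finite_measureI) simp
  have integral_P: "\<bar>\<integral>x. \<phi> x \<partial>P i\<bar> \<le> B" for i
  proof -
    have "(\<integral>x. \<phi> x \<partial>P i) \<in> {-B..B}"
    proof (rule prob_space.integral_in_atLeastAtMost[OF P(1)])
      show "\<phi> \<in> borel_measurable (P i)"
        using \<phi>(1) by (simp add: measurable_cong_sets[OF P(2) refl])
      show "\<phi> x \<in> {-B..B}" if "x \<in> space (P i)" for x
        using \<phi>(2)[of x] that sets_eq_imp_space_eq[OF P(2)] by (simp add: abs_le_iff)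
    qed
    then show ?thesis by (auto simp: abs_le_iff)
  qed
  have "summable (\<lambda>i. q i * \<bar>\<integral>x. \<phi> x \<partial>P i\<bar>)"
    by (rule summable_mult_bounded[OF q(2) q(1)]) (use integral_P in simp)
  then have "summable (\<lambda>i. norm (q i * (\<integral>x. \<phi> x \<partial>P i)))"
    using q(1) by (simp add: abs_mult)
  then have "(\<lambda>i. q i * (\<integral>x. \<phi> x \<partial>P i)) sums (\<integral>i. q i * (\<integral>x. \<phi> x \<partial>P i) \<partial>count_space UNIV)"
    by (intro sums_integral_count_space_nat) (simp add: integrable_count_space_nat_iff)
  also have "(\<integral>i. q i * (\<integral>x. \<phi> x \<partial>P i) \<partial>count_space UNIV) = (\<integral>i. (\<integral>x. \<phi> x \<partial>P i) \<partial>?W)"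
    using q(1) by (simp add: integral_density)
  also have "\<dots> = (\<integral>x. \<phi> x \<partial>(?W \<bind> P))"
    using \<phi> P_meas W
    by (intro integral_bind[symmetric, where B' = 1])
      (auto intro!: subprob_space.subprob_emeasure_le_1 prob_space_imp_subprob_space P)
  also have "?W \<bind> P = mixture N q P"
    using P by (intro mixture_eq_bind[symmetric] prob_space_imp_subprob_space)
  finally show ?thesis .
qed

lemma raise_weighted_mean:
  fixes q a :: "nat \<Rightarrow> real"
  assumes q: "\<And>i. 0 \<le> q i" "q sums 1"
    and a: "\<And>i. a i \<in> {0..1}" "(\<lambda>i. q i * a i) sums \<beta>"
    and "\<beta> \<le> \<alpha>" "\<alpha> \<le> 1"
  obtains b where "\<And>i. b i \<in> {a i..1}" "(\<lambda>i. q i * b i) sums \<alpha>"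
proof
  have "\<beta> \<le> 1"
    using weighted_mean_in_atLeastAtMost(2)[of q a 0 1, OF q a(1)] a(2) by (simp add: sums_iff)
  \<comment> \<open>if \<beta> = 1 then also \<alpha> = 1, and \<theta> = 0 by the convention x / 0 = 0\<close>
  define \<theta> where "\<theta> = (\<alpha> - \<beta>) / (1 - \<beta>)"
  have \<theta>: "0 \<le> \<theta>" "\<theta> \<le> 1"
    using \<open>\<beta> \<le> 1\<close> assms(5,6) by (auto simp: \<theta>_def divide_le_eq_1)
  show "a i + \<theta> * (1 - a i) \<in> {a i..1}" for i
    using \<theta> a(1)[of i] mult_left_le_one_le[of "1 - a i" \<theta>] by auto
  have "(\<lambda>i. q i * a i + \<theta> * (q i - q i * a i)) sums (\<beta> + \<theta> * (1 - \<beta>))"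
    by (intro sums_add sums_mult sums_diff a(2) q(2))
  moreover have "\<beta> + \<theta> * (1 - \<beta>) = \<alpha>"
    using \<open>\<beta> \<le> 1\<close> assms(5,6) by (cases "\<beta> = 1") (auto simp: \<theta>_def)
  ultimately show "(\<lambda>i. q i * (a i + \<theta> * (1 - a i))) sums \<alpha>"
    by (simp add: algebra_simps)
qed

lemma summable_weighted_tradeoff:
  assumes "\<And>i. 0 \<le> q i" "summable q" "\<And>i. is_tradeoff_fun (f i)" "\<And>i. a i \<in> {0..1}"
  shows "summable (\<lambda>i. q i * f i (a i))"
  by (rule summable_mult_bounded[where B = 1]) (use assms tradeoff_fun_range in force)+

lemma mix_lower_le:
  assumes q: "\<And>i. 0 \<le> q i" "q sums 1" and f: "\<And>i. is_tradeoff_fun (f i)"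
    and a: "\<And>i. a i \<in> {0..1}" "(\<lambda>i. q i * a i) sums \<beta>"
    and "\<beta> \<le> \<alpha>" "\<alpha> \<le> 1"
  shows "mix_lower q f \<alpha> \<le> (\<Sum>i. q i * f i (a i))"
proof -
  obtain b where b: "\<And>i. b i \<in> {a i..1}" "(\<lambda>i. q i * b i) sums \<alpha>"
    using raise_weighted_mean[OF q a assms(6,7)] by blast
  have b01: "b i \<in> {0..1}" for i
    using a(1)[of i] b(1)[of i] by auto
  have summable: "summable (\<lambda>i. q i * f i (c i))" if "\<And>i. c i \<in> {0..1}" for c
    using summable_weighted_tradeoff[OF q(1) sums_summable[OF q(2)] f that] .
  have "mix_lower q f \<alpha> \<le> (\<Sum>i. q i * f i (b i))"
    unfolding mix_lower_def
  proof (rule cInf_lower)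
    show "(\<Sum>i. q i * f i (b i)) \<in> {\<Sum>i. q i * f i (a i) |a. (\<forall>i. a i \<in> {0..1}) \<and> (\<Sum>i. q i * a i) = \<alpha>}"
      using b01 b(2) by (auto simp: sums_iff)
    have "0 \<le> (\<Sum>i. q i * f i (c i))" if "\<forall>i. c i \<in> {0..1}" for c
      using that q(1) f tradeoff_fun_range summable by (intro suminf_nonneg) auto
    then show "bdd_below {\<Sum>i. q i * f i (a i) |a. (\<forall>i. a i \<in> {0..1}) \<and> (\<Sum>i. q i * a i) = \<alpha>}"
      by (intro bdd_belowI[of _ 0]) auto
  qed
  also have "\<dots> \<le> (\<Sum>i. q i * f i (a i))"
    using q(1) f a(1) b(1) b01 summable tradeoff_fun_antimono
    by (intro suminf_le mult_left_mono) auto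
  finally show ?thesis .
qed

lemma le_mix_lowerI:
  assumes q: "\<And>i. 0 \<le> q i" "q sums 1" and "\<alpha> \<in> {0..1}"
    and le: "\<And>a. (\<And>i. a i \<in> {0..1}) \<Longrightarrow> (\<lambda>i. q i * a i) sums \<alpha> \<Longrightarrow> c \<le> (\<Sum>i. q i * f i (a i))"
  shows "c \<le> mix_lower q f \<alpha>"
  unfolding mix_lower_def
proof (rule cInf_greatest)
  have "(\<lambda>i. q i * \<alpha>) sums \<alpha>"
    using sums_mult2[OF q(2), of \<alpha>] by simp
  then show "{\<Sum>i. q i * f i (a i) |a. (\<forall>i. a i \<in> {0..1}) \<and> (\<Sum>i. q i * a i) = \<alpha>} \<noteq> {}"
    using assms(3) by (auto simp: sums_iff intro!: exI[where x = "\<lambda>_. \<alpha>"])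
next
  fix x assume "x \<in> {\<Sum>i. q i * f i (a i) |a. (\<forall>i. a i \<in> {0..1}) \<and> (\<Sum>i. q i * a i) = \<alpha>}"
  then obtain a where a: "\<And>i. a i \<in> {0..1}" "(\<Sum>i. q i * a i) = \<alpha>" and x: "x = (\<Sum>i. q i * f i (a i))"
    by blast
  have "summable (\<lambda>i. q i * a i)"
    using weighted_mean_in_atLeastAtMost(1)[OF q a(1)] .
  then show "c \<le> x"
    unfolding x using a by (intro le) (auto simp: sums_iff)
qed

lemma mix_lower_le_tradeoff_mixture:
  assumes q: "\<And>i. 0 \<le> q i" "q sums 1"
    and P: "\<And>i. prob_space (P i)" "\<And>i. sets (P i) = sets N"
    and Q: "\<And>i. prob_space (Q i)" "\<And>i. sets (Q i) = sets N"
    and f: "\<And>i. is_tradeoff_fun (f i)"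
    and f_le: "\<And>i \<alpha>. \<alpha> \<in> {0..1} \<Longrightarrow> f i \<alpha> \<le> tradeoff (P i) (Q i) \<alpha>"
    and \<alpha>: "\<alpha> \<in> {0..1}"
  shows "mix_lower q f \<alpha> \<le> tradeoff (mixture N q P) (mixture N q Q) \<alpha>"
proof (rule le_tradeoffI)
  show "0 \<le> \<alpha>" using \<alpha> by simp
  fix \<phi> :: "'a \<Rightarrow> real"
  assume "\<phi> \<in> borel_measurable (mixture N q P)"
    and "\<And>x. x \<in> space (mixture N q P) \<Longrightarrow> \<phi> x \<in> {0..1}"
    and type_I: "(\<integral>x. \<phi> x \<partial>mixture N q P) \<le> \<alpha>"
  then have \<phi>: "\<phi> \<in> borel_measurable N" "\<And>x. x \<in> space N \<Longrightarrow> \<phi> x \<in> {0..1}"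
    by (simp_all add: measurable_cong_sets[OF sets_mixture refl])
  have \<phi>_bounded: "\<bar>\<phi> x\<bar> \<le> 1" if "x \<in> space N" for x
    using \<phi>(2)[OF that] by simp
  have \<phi>_test: "\<phi> \<in> borel_measurable M" "\<And>x. x \<in> space M \<Longrightarrow> \<phi> x \<in> {0..1}"
    if "sets M = sets N" for M :: "'a measure"
    using \<phi> sets_eq_imp_space_eq[OF that] by (simp_all add: measurable_cong_sets[OF that refl])
  define A where "A i = (\<integral>x. \<phi> x \<partial>P i)" for i
  define B where "B i = (\<integral>x. \<phi> x \<partial>Q i)" for i
  have A: "A i \<in> {0..1}" for i
    unfolding A_def using \<phi>_test[OF P(2)] by (rule prob_space.integral_in_atLeastAtMost[OF P(1)])
  have sums_A: "(\<lambda>i. q i * A i) sums (\<integral>x. \<phi> x \<partial>mixture N q P)"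
    unfolding A_def using q P \<phi>(1) \<phi>_bounded by (intro integral_mixture_sums) (auto intro: sums_summable)
  have "(\<lambda>i. q i - q i * B i) sums (1 - (\<integral>x. \<phi> x \<partial>mixture N q Q))"
    unfolding B_def using q Q \<phi>(1) \<phi>_bounded
    by (intro sums_diff integral_mixture_sums) (auto intro: sums_summable)
  then have sums_B: "(\<lambda>i. q i * (1 - B i)) sums (1 - (\<integral>x. \<phi> x \<partial>mixture N q Q))"
    by (simp add: right_diff_distrib)
  have "f i (A i) \<le> 1 - B i" for i
  proof -
    have "f i (A i) \<le> tradeoff (P i) (Q i) (A i)"
      using A by (rule f_le)
    also have "\<dots> \<le> 1 - B i"
      unfolding A_def B_def using Q P(2) \<phi>_test[OF P(2)] by (intro tradeoff_le) auto
    finally show ?thesis .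
  qed
  then have "(\<Sum>i. q i * f i (A i)) \<le> 1 - (\<integral>x. \<phi> x \<partial>mixture N q Q)"
    using q(1) summable_weighted_tradeoff[OF q(1) sums_summable[OF q(2)] f A]
    by (intro sums_le[OF _ summable_sums sums_B] mult_left_mono)
  moreover have "mix_lower q f \<alpha> \<le> (\<Sum>i. q i * f i (A i))"
    using \<alpha> by (intro mix_lower_le[OF q f A sums_A type_I]) simp
  ultimately show "mix_lower q f \<alpha> \<le> 1 - (\<integral>x. \<phi> x \<partial>mixture N q Q)"
    by linarith
qed

lemma tradeoff_fun_le_mix_lower:
  fixes f :: "nat \<Rightarrow> real \<Rightarrow> real"
  assumes q: "\<And>i. 0 \<le> q i" "q sums 1" and f: "\<And>i. is_tradeoff_fun (f i)"
    and f_mono: "\<And>i x. x \<in> {0..1} \<Longrightarrow> f i x \<le> f (Suc i) x"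
    and \<alpha>: "\<alpha> \<in> {0..1}"
  shows "f t (min 1 (\<alpha> + (\<Sum>i<t. q i))) \<le> mix_lower q f \<alpha>"
proof (rule le_mix_lowerI[OF q \<alpha>])
  fix a assume a: "\<And>i. a i \<in> {0..1}" "(\<lambda>i. q i * a i) sums \<alpha>"
  define y where "y i = (if i < t then 1 else a i)" for i
  have y: "y i \<in> {0..1}" for i
    using a(1) by (simp add: y_def)
  have summable_f_y: "summable (\<lambda>i. q i * f t (y i))"
    by (rule summable_weighted_tradeoff[where f = "\<lambda>_. f t", OF q(1) sums_summable[OF q(2)] _ y])
      (rule f)
  note mean = weighted_mean_in_atLeastAtMost[OF q y]
  have "(\<Sum>i. q i * y i) \<in> {0..1}"
    by (fact mean(2))
  moreover have "(\<Sum>i. q i * y i) \<le> \<alpha> + (\<Sum>i<t. q i)"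
  proof (rule sums_le[OF _ summable_sums[OF mean(1)] sums_add[OF a(2) sums_If_finite_set]])
    show "q i * y i \<le> q i * a i + (if i \<in> {..<t} then q i else 0)" for i
      using q(1)[of i] a(1)[of i] by (simp add: y_def mult_left_le)
  qed simp
  moreover have "0 \<le> \<alpha> + (\<Sum>i<t. q i)"
    using \<alpha> q(1) by (simp add: sum_nonneg)
  ultimately have "f t (min 1 (\<alpha> + (\<Sum>i<t. q i))) \<le> f t (\<Sum>i. q i * y i)"
    by (intro tradeoff_fun_antimono[OF f]) simp_all
  also have "\<dots> \<le> (\<Sum>i. q i * f t (y i))"
  proof (rule convex_on_suminf_le[OF _ _ q y summable_f_y])
    show "convex_on {0..1} (f t)" "continuous_on {0..1} (f t)"
      using f[of t] unfolding is_tradeoff_fun_def by blast+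
  qed
  also have "\<dots> \<le> (\<Sum>i. q i * f i (a i))"
  proof (rule suminf_le)
    show "q i * f t (y i) \<le> q i * f i (a i)" for i
    proof (cases "i < t")
      case True
      then show ?thesis
        using q(1)[of i] tradeoff_fun_range[OF f a(1)] by (simp add: y_def tradeoff_fun_one[OF f])
    next
      case False
      then have "f t (a i) \<le> f i (a i)"
        using lift_Suc_mono_le[of "\<lambda>j. f j (a i)"] f_mono a(1) by simp
      then show ?thesis
        using False q(1)[of i] by (simp add: y_def mult_left_mono)
    qed
    show "summable (\<lambda>i. q i * f i (a i))"
      by (rule summable_weighted_tradeoff[OF q(1) sums_summable[OF q(2)] f a(1)])
  qed (rule summable_f_y)
  finally show "f t (min 1 (\<alpha> + (\<Sum>i<t. q i))) \<le> (\<Sum>i. q i * f i (a i))" .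
qed

theorem lemma2:
  fixes q :: "nat \<Rightarrow> real"
    and M :: "nat \<Rightarrow> 'd \<Rightarrow> 'a measure"
    and N :: "'a measure"
    and d d' :: 'd
    and f :: "nat \<Rightarrow> real \<Rightarrow> real"
    and t :: nat
  assumes q_nonneg: "\<And>i. 0 \<le> q i"
    and q_sum: "q sums 1"
    and prob_d: "\<And>i. prob_space (M i d)"
    and prob_d': "\<And>i. prob_space (M i d')"
    and sets_d: "\<And>i. sets (M i d) = sets N"
    and sets_d': "\<And>i. sets (M i d') = sets N"
    and f_tradeoff: "\<And>i. is_tradeoff_fun (f i)"
    and f_bound: "\<And>i \<alpha>. \<alpha> \<in> {0..1} \<Longrightarrow> f i \<alpha> \<le> tradeoff (M i d) (M i d') \<alpha>"
    and f_mono: "\<And>i \<alpha>. \<alpha> \<in> {0..1} \<Longrightarrow> f i \<alpha> \<le> f (Suc i) \<alpha>"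
  shows "\<forall>\<alpha>\<in>{0..1}.
           mix_lower q f \<alpha> \<le> tradeoff (mixture N q (\<lambda>i. M i d)) (mixture N q (\<lambda>i. M i d')) \<alpha>
         \<and> f t (min 1 (\<alpha> + (\<Sum>i<t. q i))) \<le> mix_lower q f \<alpha>"
proof (intro ballI conjI)
  fix \<alpha> :: real
  assume \<alpha>: "\<alpha> \<in> {0..1}"
  show "mix_lower q f \<alpha> \<le> tradeoff (mixture N q (\<lambda>i. M i d)) (mixture N q (\<lambda>i. M i d')) \<alpha>"
    using mix_lower_le_tradeoff_mixture[OF q_nonneg q_sum prob_d sets_d prob_d' sets_d' f_tradeoff
        f_bound \<alpha>] .
  show "f t (min 1 (\<alpha> + (\<Sum>i<t. q i))) \<le> mix_lower q f \<alpha>"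
    using tradeoff_fun_le_mix_lower[of q f, OF q_nonneg q_sum f_tradeoff f_mono \<alpha>] .
qed

end
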